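(* Let $q_1,q_2,q_3,q_4\in\widehat{\mathbb H}$ be four distinct points and let $q'_1,q'_2,q'_3,q'_4\in\widehat{\mathbb H}$ be another quadruple of distinct points. Then there exists a fractional linear transformation $T$ of $\widehat{\mathbb H}$ with $T(q_n)=q'_n$ for $n=1,2,3,4$ if and only if $$R_{\mathbb H}(q_1,q_2,q_3,q_4)=R_{\mathbb H}(q'_1,q'_2,q'_3,q'_4).$$
   Context: $\mathbb H$ denotes the quaternions, with conjugate $\bar q$, norm $|q|=\sqrt{q\bar q}$, real part $\operatorname{Re} q=(q+\bar q)/2$; $\widehat{\mathbb H}=\mathbb H\cup\{\infty\}$. The group $GL(2,\mathbb H)$ of invertible $2\times 2$ quaternionic matrices acts on $\widehat{\mathbb H}$ by fractional linear transformations $\pi(\gamma)(q)=(aq+b)(cq+d)^{-1}$ for $\gamma=\begin{pmatrix}a&b\\c&d\end{pmatrix}$; a fractional linear transformation is a map of the form $\pi(\gamma)$. For four distinct points $q_1,q_2,q_3,q_4\in\widehat{\mathbb H}$ the cross-ratio is $Q(q_1,q_2,q_3,q_4)=(q_2-q_1)^{-1}(q_4-q_1)(q_4-q_3)^{-1}(q_2-q_3)\in\mathbb H$, where if some $q_n=\infty$ the value is defined by letting $q_n\to\infty$ and taking the limit. Define $R_{\mathbb H}(q_1,q_2,q_3,q_4)=\bigl(|Q(q_1,q_2,q_3,q_4)|,\operatorname{Re}Q(q_1,q_2,q_3,q_4)\bigr)\in\mathbb R^2$. *)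

theory Defs
  imports Complex_Main
begin

datatype quat = Quat (qr: real) (qi: real) (qj: real) (qk: real)

definition qzero :: quat where "qzero = Quat 0 0 0 0"
definition qone :: quat where "qone = Quat 1 0 0 0"

definition qadd :: "quat \<Rightarrow> quat \<Rightarrow> quat" where
  "qadd p q = Quat (qr p + qr q) (qi p + qi q) (qj p + qj q) (qk p + qk q)"

definition qsub :: "quat \<Rightarrow> quat \<Rightarrow> quat" where
  "qsub p q = Quat (qr p - qr q) (qi p - qi q) (qj p - qj q) (qk p - qk q)"

definition qmul :: "quat \<Rightarrow> quat \<Rightarrow> quat" where
  "qmul p q = Quat
     (qr p * qr q - qi p * qi q - qj p * qj q - qk p * qk q)
     (qr p * qi q + qi p * qr q + qj p * qk q - qk p * qj q)
     (qr p * qj q - qi p * qk q + qj p * qr q + qk p * qi q)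
     (qr p * qk q + qi p * qj q - qj p * qi q + qk p * qr q)"

definition qcnj :: "quat \<Rightarrow> quat" where
  "qcnj q = Quat (qr q) (- qi q) (- qj q) (- qk q)"

definition qnormsq :: "quat \<Rightarrow> real" where
  "qnormsq q = (qr q)^2 + (qi q)^2 + (qj q)^2 + (qk q)^2"

definition qnorm :: "quat \<Rightarrow> real" where
  "qnorm q = sqrt (qnormsq q)"

definition qinv :: "quat \<Rightarrow> quat" where
  "qinv q = Quat (qr q / qnormsq q) (- qi q / qnormsq q) (- qj q / qnormsq q) (- qk q / qnormsq q)"

definition qRe :: "quat \<Rightarrow> real" where
  "qRe q = qr (qadd q (qcnj q)) / 2"

datatype qext = Fin quat | Infty

text \<open>2x2 quaternionic matrices (a, b, c, d) = [[a, b], [c, d]].\<close>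
type_synonym qmat = "quat \<times> quat \<times> quat \<times> quat"

fun qmat_mult :: "qmat \<Rightarrow> qmat \<Rightarrow> qmat" where
  "qmat_mult (a, b, c, d) (a', b', c', d') =
     (qadd (qmul a a') (qmul b c'), qadd (qmul a b') (qmul b d'),
      qadd (qmul c a') (qmul d c'), qadd (qmul c b') (qmul d d'))"

definition qmat_id :: qmat where "qmat_id = (qone, qzero, qzero, qone)"

definition qGL2 :: "qmat \<Rightarrow> bool" where
  "qGL2 g \<longleftrightarrow> (\<exists>h. qmat_mult g h = qmat_id \<and> qmat_mult h g = qmat_id)"

text \<open>Action pi(gamma)(q) = (a q + b)(c q + d)^{-1}, extended to infinity
  (value at a pole is infinity; value at infinity is the limit a c^{-1}, or infinity if c = 0).\<close>
fun flt :: "qmat \<Rightarrow> qext \<Rightarrow> qext" where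
  "flt (a, b, c, d) (Fin q) =
     (if qadd (qmul c q) d = qzero then Infty
      else Fin (qmul (qadd (qmul a q) b) (qinv (qadd (qmul c q) d))))"
| "flt (a, b, c, d) Infty = (if c = qzero then Infty else Fin (qmul a (qinv c)))"

text \<open>Cross-ratio Q(q1,q2,q3,q4) = (q2-q1)^{-1}(q4-q1)(q4-q3)^{-1}(q2-q3); when one point is
  infinity, the limiting expression (for q2 = infinity the value is determined up to
  conjugation, which does not affect |Q| and Re Q; we take the representative
  (q4-q1)(q4-q3)^{-1}). Other patterns (several infinite points) are irrelevant.\<close>
fun qcr :: "qext \<Rightarrow> qext \<Rightarrow> qext \<Rightarrow> qext \<Rightarrow> quat" where
  "qcr (Fin q1) (Fin q2) (Fin q3) (Fin q4) =
     qmul (qmul (qmul (qinv (qsub q2 q1)) (qsub q4 q1)) (qinv (qsub q4 q3))) (qsub q2 q3)"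
| "qcr Infty (Fin q2) (Fin q3) (Fin q4) = qmul (qinv (qsub q4 q3)) (qsub q2 q3)"
| "qcr (Fin q1) Infty (Fin q3) (Fin q4) = qmul (qsub q4 q1) (qinv (qsub q4 q3))"
| "qcr (Fin q1) (Fin q2) Infty (Fin q4) = qmul (qinv (qsub q2 q1)) (qsub q4 q1)"
| "qcr (Fin q1) (Fin q2) (Fin q3) Infty = qmul (qinv (qsub q2 q1)) (qsub q2 q3)"
| "qcr _ _ _ _ = qzero"

definition RH :: "qext \<Rightarrow> qext \<Rightarrow> qext \<Rightarrow> qext \<Rightarrow> real \<times> real" where
  "RH q1 q2 q3 q4 = (qnorm (qcr q1 q2 q3 q4), qRe (qcr q1 q2 q3 q4))"

end

theory Submission
  imports Defs
begin

text \<open>Normalising a quadruple by a fractional linear transformation that sends the first three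
  points to \<open>0, 1, \<infinity>\<close> sends the fourth point to its cross-ratio. The transformations fixing
  \<open>0, 1, \<infinity>\<close> are exactly the conjugations \<open>x \<mapsto> l x l\<inverse>\<close>, so two quadruples are
  equivalent iff their cross-ratios are conjugate quaternions. Finally, two quaternions are
  conjugate iff they have the same norm and the same real part, i.e. the same \<open>R\<^sub>\<bbbH>\<close>.\<close>

instantiation quat :: division_ring
begin

definition zero_quat_def: "0 = qzero"
definition one_quat_def: "1 = qone"
definition plus_quat_def: "p + q = qadd p q"
definition minus_quat_def: "p - q = qsub p q"
definition uminus_quat_def: "- q = Quat (- qr q) (- qi q) (- qj q) (- qk q)"
definition times_quat_def: "p * q = qmul p q"
definition inverse_quat_def: "inverse q = qinv q"
definition divide_quat_def: "(p::quat) div q = p * qinv q"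

lemma qnormsq_pos: "q \<noteq> qzero \<Longrightarrow> qnormsq q > 0"
  by (cases q) (auto simp: qzero_def qnormsq_def add_pos_nonneg add_nonneg_pos)

instance
proof
  fix a b c :: quat
  show "a * b * c = a * (b * c)"
    by (rule quat.expand) (simp add: times_quat_def qmul_def algebra_simps)
  show "a + b + c = a + (b + c)" "a + b = b + a"
    by (rule quat.expand, simp add: plus_quat_def qadd_def algebra_simps)+
  show "0 + a = a" "- a + a = 0"
    by (rule quat.expand, simp add: plus_quat_def uminus_quat_def zero_quat_def qzero_def qadd_def)+
  show "1 * a = a" "a * 1 = a"
    by (rule quat.expand, simp add: times_quat_def one_quat_def qone_def qmul_def)+
  show "a - b = a + - b"
    by (rule quat.expand) (simp add: plus_quat_def uminus_quat_def minus_quat_def qsub_def qadd_def)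
  show "(a + b) * c = a * c + b * c" "a * (b + c) = a * b + a * c"
    by (rule quat.expand, simp add: times_quat_def plus_quat_def qmul_def qadd_def algebra_simps)+
  show "(0::quat) \<noteq> 1" by (simp add: zero_quat_def one_quat_def qzero_def qone_def)
  show "a div b = a * inverse b" by (simp add: divide_quat_def inverse_quat_def)
  show "inverse (0::quat) = 0" by (simp add: inverse_quat_def qinv_def zero_quat_def qzero_def)
  assume "a \<noteq> 0"
  then have "qnormsq a \<noteq> 0" using qnormsq_pos zero_quat_def by fastforce
  then show "inverse a * a = 1" "a * inverse a = 1"
    by (intro quat.expand,
        simp_all add: times_quat_def inverse_quat_def qinv_def qmul_def one_quat_def qone_def
          field_simps, simp_all add: qnormsq_def power2_eq_square)+
qed

end

lemma quat_ops: "qzero = 0" "qone = 1" "qadd p q = p + q" "qsub p q = p - q"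
  "qmul p q = p * q" "qinv p = inverse p"
  by (simp_all add: zero_quat_def one_quat_def plus_quat_def minus_quat_def times_quat_def
      inverse_quat_def)

lemma qRe_eq_qr: "qRe q = qr q"
  by (simp add: qRe_def qadd_def qcnj_def)

lemma qr_mult_commute: "qr (p * q) = qr (q * p)"
  by (simp add: times_quat_def qmul_def algebra_simps)

lemma qnormsq_mult: "qnormsq (p * q) = qnormsq p * qnormsq q"
  by (simp add: times_quat_def qmul_def qnormsq_def power2_eq_square algebra_simps)

lemma qnormsq_inverse: "qnormsq (inverse p) = inverse (qnormsq p)"
proof (cases "p = 0")
  case True
  have "qnormsq 0 = 0" by (simp add: qnormsq_def zero_quat_def qzero_def)
  with True show ?thesis by simp
next
  case False
  then have "qnormsq (inverse p) * qnormsq p = qnormsq 1" by (simp flip: qnormsq_mult)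
  also have "\<dots> = 1" by (simp add: qnormsq_def one_quat_def qone_def)
  finally show ?thesis by (metis inverse_unique mult.commute)
qed

lemma qnormsq_conjugate: "l \<noteq> 0 \<Longrightarrow> qnormsq (l * q * inverse l) = qnormsq q"
  using qnormsq_pos[of l] by (simp add: qnormsq_mult qnormsq_inverse quat_ops)

lemma qr_conjugate: "l \<noteq> 0 \<Longrightarrow> qr (l * q * inverse l) = qr q"
  by (metis qr_mult_commute mult.assoc left_inverse mult_1_left)

text \<open>If the imaginary parts \<open>u, u'\<close> have equal norm, then \<open>l = -(u + u') u\<close> satisfies
  \<open>l u = u' l\<close> because \<open>u\<^sup>2 = u'\<^sup>2\<close> is real; the witness below is this \<open>l\<close> in coordinates. It
  vanishes only when \<open>u' = -u\<close>, and then any pure imaginary \<open>l \<perp> u\<close> anticommutes with \<open>u\<close>.\<close>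

lemma exists_conjugating_quat:
  fixes r a b c a' b' c' :: real
  assumes "a*a + b*b + c*c = a'*a' + b'*b' + c'*c'"
  shows "\<exists>l. l \<noteq> 0 \<and> l * Quat r a b c = Quat r a' b' c' * l"
proof (cases "a' = -a \<and> b' = -b \<and> c' = -c")
  case False
  let ?S = "a*a + b*b + c*c"
  let ?l = "Quat (?S + a*a' + b*b' + c*c') (c'*b - b'*c) (a'*c - c'*a) (b'*a - a'*b)"
  have "(a + a')^2 + (b + b')^2 + (c + c')^2 \<noteq> 0"
    using False by (auto simp: add_nonneg_eq_0_iff add_nonneg_nonneg)
  then have "?l \<noteq> 0"
    using assms by (auto simp: zero_quat_def qzero_def power2_eq_square algebra_simps)
  moreover have "?l * Quat r a b c = Quat r a' b' c' * ?l"
    unfolding times_quat_def qmul_def using assms by simp algebra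
  ultimately show ?thesis by blast
next
  case opposite: True
  show ?thesis
  proof (cases "a = 0 \<and> b = 0")
    case True
    then show ?thesis using opposite
      by (intro exI[of _ "Quat 0 1 0 0"]) (simp add: times_quat_def qmul_def zero_quat_def qzero_def)
  next
    case False
    then show ?thesis using opposite
      by (intro exI[of _ "Quat 0 (- b) a 0"])
        (auto simp: times_quat_def qmul_def zero_quat_def qzero_def algebra_simps)
  qed
qed

lemma conjugate_iff_qnormsq_qr:
  "(\<exists>l. l \<noteq> 0 \<and> q = l * p * inverse l) \<longleftrightarrow> qnormsq p = qnormsq q \<and> qr p = qr q"
proof
  assume "\<exists>l. l \<noteq> 0 \<and> q = l * p * inverse l"
  then show "qnormsq p = qnormsq q \<and> qr p = qr q"
    using qnormsq_conjugate qr_conjugate by metis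
next
  assume eq: "qnormsq p = qnormsq q \<and> qr p = qr q"
  obtain r a b c where p: "p = Quat r a b c" by (cases p)
  obtain a' b' c' where q: "q = Quat r a' b' c'" using eq p by (cases q) auto
  have "a*a + b*b + c*c = a'*a' + b'*b' + c'*c'"
    using eq p q by (simp add: qnormsq_def power2_eq_square)
  then obtain l where "l \<noteq> 0" "l * p = q * l"
    using exists_conjugating_quat p q by blast
  then show "\<exists>l. l \<noteq> 0 \<and> q = l * p * inverse l" by (metis mult.assoc right_inverse mult_1_right)
qed

lemma RH_eq_iff_conjugate:
  "RH q1 q2 q3 q4 = RH p1 p2 p3 p4 \<longleftrightarrow>
     (\<exists>l. l \<noteq> 0 \<and> qcr p1 p2 p3 p4 = l * qcr q1 q2 q3 q4 * inverse l)"
proof -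
  have "qnormsq x \<ge> 0" for x by (simp add: qnormsq_def)
  then show ?thesis
    unfolding conjugate_iff_qnormsq_qr RH_def qnorm_def qRe_eq_qr by (auto simp: real_sqrt_eq_iff)
qed

text \<open>A fractional linear transformation is the action of a matrix on the right quaternionic
  lines of \<open>\<bbbH>\<^sup>2\<close>, read through homogeneous coordinates; this makes composition evident.\<close>

definition qext_coords :: "qext \<Rightarrow> quat \<times> quat" where
  "qext_coords p = (case p of Fin q \<Rightarrow> (q, 1) | Infty \<Rightarrow> (1, 0))"

definition qext_of_coords :: "quat \<times> quat \<Rightarrow> qext" where
  "qext_of_coords v = (if snd v = 0 then Infty else Fin (fst v * inverse (snd v)))"

fun qmat_apply :: "qmat \<Rightarrow> quat \<times> quat \<Rightarrow> quat \<times> quat" where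
  "qmat_apply (a, b, c, d) (x, y) = (a * x + b * y, c * x + d * y)"

fun scale_coords :: "quat \<times> quat \<Rightarrow> quat \<Rightarrow> quat \<times> quat" where
  "scale_coords (x, y) l = (x * l, y * l)"

lemma flt_eq_qext_of_coords: "flt g p = qext_of_coords (qmat_apply g (qext_coords p))"
  by (cases g rule: prod_cases4; cases p) (simp_all add: quat_ops qext_coords_def qext_of_coords_def)

lemma qmat_apply_mult: "qmat_apply (qmat_mult g h) v = qmat_apply g (qmat_apply h v)"
  by (cases g rule: prod_cases4; cases h rule: prod_cases4; cases v) (simp add: quat_ops algebra_simps)

lemma qmat_apply_scale_coords: "qmat_apply g (scale_coords v l) = scale_coords (qmat_apply g v) l"
  by (cases g rule: prod_cases4; cases v) (simp add: algebra_simps)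

lemma qmat_apply_id: "qmat_apply qmat_id v = v"
  by (cases v) (simp add: qmat_id_def quat_ops)

lemma qmat_apply_zero: "qmat_apply g (0, 0) = (0, 0)"
  by (cases g rule: prod_cases4) simp

lemma qext_of_coords_scale: "l \<noteq> 0 \<Longrightarrow> qext_of_coords (scale_coords v l) = qext_of_coords v"
  by (cases v) (simp add: qext_of_coords_def nonzero_inverse_mult_distrib mult.assoc,
      simp add: mult.assoc[symmetric])

lemma coords_eq_scale_qext_coords:
  assumes "v \<noteq> (0, 0)"
  obtains l where "l \<noteq> 0" "v = scale_coords (qext_coords (qext_of_coords v)) l"
proof (cases v)
  case (Pair x y)
  show ?thesis
  proof (cases "y = 0")
    case True
    then show ?thesis using that assms Pair by (auto simp: qext_of_coords_def qext_coords_def)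
  next
    case False
    then show ?thesis using that Pair
      by (auto simp: qext_of_coords_def qext_coords_def mult.assoc intro!: that[of y])
  qed
qed

lemma qmat_apply_nonzero: "qGL2 g \<Longrightarrow> v \<noteq> (0, 0) \<Longrightarrow> qmat_apply g v \<noteq> (0, 0)"
  unfolding qGL2_def by (metis qmat_apply_id qmat_apply_mult qmat_apply_zero)

lemma qext_coords_nonzero: "qext_coords p \<noteq> (0, 0)"
  by (cases p) (auto simp: qext_coords_def)

lemma flt_qmat_mult:
  assumes "qGL2 h"
  shows "flt (qmat_mult g h) p = flt g (flt h p)"
proof -
  let ?w = "qmat_apply h (qext_coords p)"
  obtain l where l: "l \<noteq> 0" "?w = scale_coords (qext_coords (qext_of_coords ?w)) l"
    using coords_eq_scale_qext_coords qmat_apply_nonzero[OF assms qext_coords_nonzero] by blast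
  have "flt (qmat_mult g h) p = qext_of_coords (qmat_apply g ?w)"
    by (simp add: flt_eq_qext_of_coords qmat_apply_mult)
  also have "\<dots> = qext_of_coords (scale_coords (qmat_apply g (qext_coords (qext_of_coords ?w))) l)"
    by (subst l(2)) (simp add: qmat_apply_scale_coords)
  also have "\<dots> = flt g (flt h p)"
    using l(1) by (simp add: qext_of_coords_scale flt_eq_qext_of_coords)
  finally show ?thesis .
qed

lemma flt_qmat_id: "flt qmat_id p = p"
  by (cases p) (simp_all add: qmat_id_def quat_ops)

lemma qmat_mult_assoc: "qmat_mult (qmat_mult g h) k = qmat_mult g (qmat_mult h k)"
  by (cases g rule: prod_cases4; cases h rule: prod_cases4; cases k rule: prod_cases4)
    (simp add: quat_ops algebra_simps)

lemma qmat_mult_id_left: "qmat_mult qmat_id k = k"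
  by (cases k rule: prod_cases4) (simp add: qmat_id_def quat_ops)

lemma qGL2_mult:
  assumes "qGL2 g" "qGL2 h"
  shows "qGL2 (qmat_mult g h)"
proof -
  obtain g' h' where "qmat_mult g g' = qmat_id" "qmat_mult g' g = qmat_id"
    "qmat_mult h h' = qmat_id" "qmat_mult h' h = qmat_id"
    using assms unfolding qGL2_def by blast
  then show ?thesis
    unfolding qGL2_def by (metis qmat_mult_assoc qmat_mult_id_left)
qed

lemma qGL2_inverse_flt:
  assumes "qGL2 g"
  obtains h where "qGL2 h" "\<And>p. flt h (flt g p) = p" "\<And>p. flt g (flt h p) = p"
proof -
  obtain h where h: "qmat_mult g h = qmat_id" "qmat_mult h g = qmat_id"
    using assms unfolding qGL2_def by blast
  then have "qGL2 h" unfolding qGL2_def by blast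
  then show ?thesis
    using that h flt_qmat_mult[OF assms, of h] flt_qmat_mult[of h g] by (metis flt_qmat_id)
qed

lemma flt_fixing_0_1_Infty_is_conjugation:
  assumes "flt g (Fin 0) = Fin 0" "flt g (Fin 1) = Fin 1" "flt g Infty = Infty"
  obtains l where "l \<noteq> 0" "\<And>x. flt g (Fin x) = Fin (l * x * inverse l)"
proof -
  obtain a b c d where g: "g = (a, b, c, d)" by (cases g rule: prod_cases4)
  have "c = 0" using assms(3) g by (simp add: quat_ops split: if_splits)
  moreover have "d \<noteq> 0" "b = 0" using assms(1) g \<open>c = 0\<close> by (auto simp: quat_ops split: if_splits)
  moreover have "a = d"
    using assms(2) g \<open>c = 0\<close> \<open>d \<noteq> 0\<close> \<open>b = 0\<close>
    by (simp add: quat_ops split: if_splits) (metis mult.assoc left_inverse mult_1_right mult_1_left)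
  ultimately show ?thesis using that g by (simp add: quat_ops)
qed

lemma flt_scalar_qmat: "l \<noteq> 0 \<Longrightarrow> flt (l, 0, 0, l) (Fin x) = Fin (l * x * inverse l)"
  by (simp add: quat_ops)

lemma flt_scalar_qmat_Infty: "l \<noteq> 0 \<Longrightarrow> flt (l, 0, 0, l) Infty = Infty"
  by (simp add: quat_ops)

definition diag_qmat :: "quat \<Rightarrow> quat \<Rightarrow> qmat" where "diag_qmat a d = (a, 0, 0, d)"
definition transl_qmat :: "quat \<Rightarrow> qmat" where "transl_qmat b = (1, b, 0, 1)"
definition swap_qmat :: qmat where "swap_qmat = (0, 1, 1, 0)"

lemma qGL2_diag_qmat: "a \<noteq> 0 \<Longrightarrow> d \<noteq> 0 \<Longrightarrow> qGL2 (diag_qmat a d)"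
  unfolding qGL2_def
  by (rule exI[of _ "diag_qmat (inverse a) (inverse d)"]) (simp add: diag_qmat_def quat_ops qmat_id_def)

lemma qGL2_transl_qmat: "qGL2 (transl_qmat b)"
  unfolding qGL2_def
  by (rule exI[of _ "transl_qmat (- b)"]) (simp add: transl_qmat_def quat_ops qmat_id_def)

lemma qGL2_swap_qmat: "qGL2 swap_qmat"
  unfolding qGL2_def by (rule exI[of _ swap_qmat]) (simp add: swap_qmat_def quat_ops qmat_id_def)

lemma qGL2_scalar_qmat: "l \<noteq> 0 \<Longrightarrow> qGL2 (l, 0, 0, l)"
  using qGL2_diag_qmat[of l l] by (simp add: diag_qmat_def)

lemma qGL2_pole_zero:
  assumes "x1 \<noteq> x3"
  shows "qGL2 (1, - x1, 1, - x3)"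
proof -
  have "(1, - x1, 1, - x3) =
      qmat_mult (transl_qmat 1) (qmat_mult (diag_qmat (x3 - x1) 1) (qmat_mult swap_qmat (transl_qmat (- x3))))"
    by (simp add: transl_qmat_def diag_qmat_def swap_qmat_def quat_ops algebra_simps)
  then show ?thesis
    using assms by (metis qGL2_mult qGL2_transl_qmat qGL2_diag_qmat qGL2_swap_qmat one_neq_zero right_minus_eq)
qed

lemma qGL2_scaled_pole_zero:
  assumes "x1 \<noteq> x3" "a \<noteq> 0" "c \<noteq> 0"
  shows "qGL2 (a, - (a * x1), c, - (c * x3))"
proof -
  have "(a, - (a * x1), c, - (c * x3)) = qmat_mult (diag_qmat a c) (1, - x1, 1, - x3)"
    by (simp add: diag_qmat_def quat_ops)
  then show ?thesis using assms qGL2_pole_zero qGL2_diag_qmat qGL2_mult by metis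
qed

lemma qGL2_scaled_pole:
  assumes "c \<noteq> 0"
  shows "qGL2 (0, 1, c, - (c * x3))"
proof -
  have "(0, 1, c, - (c * x3)) = qmat_mult (diag_qmat 1 c) (qmat_mult swap_qmat (transl_qmat (- x3)))"
    by (simp add: transl_qmat_def diag_qmat_def swap_qmat_def quat_ops)
  then show ?thesis using assms by (metis qGL2_mult qGL2_transl_qmat qGL2_diag_qmat qGL2_swap_qmat one_neq_zero)
qed

lemma qGL2_affine:
  assumes "a \<noteq> 0"
  shows "qGL2 (a, - (a * x1), 0, 1)"
proof -
  have "(a, - (a * x1), 0, 1) = qmat_mult (diag_qmat a 1) (transl_qmat (- x1))"
    by (simp add: transl_qmat_def diag_qmat_def quat_ops)
  then show ?thesis using assms by (metis qGL2_mult qGL2_transl_qmat qGL2_diag_qmat one_neq_zero)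
qed

lemma flt_scaled_pole_zero_Fin:
  assumes "x \<noteq> x3" "c \<noteq> 0"
  shows "flt (a, - (a * x1), c, - (c * x3)) (Fin x) = Fin (a * (x - x1) * inverse (x - x3) * inverse c)"
proof -
  have "c * x - c * x3 = c * (x - x3)" "a * x - a * x1 = a * (x - x1)" by (simp_all add: algebra_simps)
  moreover have "c * (x - x3) \<noteq> 0" using assms by simp
  ultimately show ?thesis
    using assms by (simp add: quat_ops nonzero_inverse_mult_distrib mult.assoc)
qed

lemma normal_form_finite:
  assumes "distinct [Fin x1, Fin x2, Fin x3, q4]"
  shows "\<exists>S. qGL2 S \<and> flt S (Fin x1) = Fin 0 \<and> flt S (Fin x2) = Fin 1 \<and> flt S (Fin x3) = Infty
     \<and> flt S q4 = Fin (qcr (Fin x1) (Fin x2) (Fin x3) q4)"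
proof -
  define a where "a = inverse (x2 - x1)"
  define c where "c = inverse (x2 - x3)"
  have d: "x1 \<noteq> x2" "x1 \<noteq> x3" "x2 \<noteq> x3" using assms by auto
  have a: "a \<noteq> 0" "a * (x2 - x1) = 1" using d by (simp_all add: a_def)
  have c: "c \<noteq> 0" "inverse c = x2 - x3" using d by (simp_all add: c_def)
  let ?S = "(a, - (a * x1), c, - (c * x3))"
  have "qGL2 ?S" using qGL2_scaled_pole_zero d(2) a(1) c(1) by blast
  moreover have "flt ?S (Fin x1) = Fin 0" using d c flt_scaled_pole_zero_Fin[of x1 x3 c a x1] by simp
  moreover have "flt ?S (Fin x2) = Fin 1" using d c a flt_scaled_pole_zero_Fin[of x2 x3 c a x1]
    by (simp add: mult.assoc[symmetric])
  moreover have "flt ?S (Fin x3) = Infty" by (simp add: quat_ops)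
  moreover have "flt ?S q4 = Fin (qcr (Fin x1) (Fin x2) (Fin x3) q4)"
  proof (cases q4)
    case (Fin x4)
    then have "x4 \<noteq> x3" using assms by auto
    then show ?thesis using Fin flt_scaled_pole_zero_Fin[of x4 x3 c a x1] c
      by (simp add: quat_ops a_def mult.assoc)
  next
    case Infty
    then show ?thesis using c by (simp add: quat_ops a_def)
  qed
  ultimately show ?thesis by blast
qed

lemma normal_form_Infty_first:
  assumes "distinct [Infty, Fin x2, Fin x3, Fin x4]"
  shows "\<exists>S. qGL2 S \<and> flt S Infty = Fin 0 \<and> flt S (Fin x2) = Fin 1 \<and> flt S (Fin x3) = Infty
     \<and> flt S (Fin x4) = Fin (qcr Infty (Fin x2) (Fin x3) (Fin x4))"
proof -
  define c where "c = inverse (x2 - x3)"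
  have d: "x2 \<noteq> x3" "x4 \<noteq> x3" using assms by auto
  have c: "c \<noteq> 0" "inverse c = x2 - x3" using d by (simp_all add: c_def)
  let ?S = "(0, 1, c, - (c * x3))"
  have f: "flt ?S (Fin x) = Fin (inverse (x - x3) * inverse c)" if "x \<noteq> x3" for x
  proof -
    have "c * x - c * x3 = c * (x - x3)" by (simp add: algebra_simps)
    then show ?thesis using that c by (simp add: quat_ops nonzero_inverse_mult_distrib)
  qed
  have "qGL2 ?S" using qGL2_scaled_pole c(1) by blast
  moreover have "flt ?S Infty = Fin 0" using c by (simp add: quat_ops)
  moreover have "flt ?S (Fin x2) = Fin 1" using d c f[of x2] by simp
  moreover have "flt ?S (Fin x3) = Infty" by (simp add: quat_ops)
  moreover have "flt ?S (Fin x4) = Fin (qcr Infty (Fin x2) (Fin x3) (Fin x4))"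
    using d c f[of x4] by (simp add: quat_ops)
  ultimately show ?thesis by blast
qed

lemma normal_form_Infty_second:
  assumes "distinct [Fin x1, Infty, Fin x3, Fin x4]"
  shows "\<exists>S. qGL2 S \<and> flt S (Fin x1) = Fin 0 \<and> flt S Infty = Fin 1 \<and> flt S (Fin x3) = Infty
     \<and> flt S (Fin x4) = Fin (qcr (Fin x1) Infty (Fin x3) (Fin x4))"
proof -
  have d: "x1 \<noteq> x3" "x4 \<noteq> x3" using assms by auto
  let ?S = "(1, - x1, 1, - x3)"
  have f: "flt ?S (Fin x) = Fin ((x - x1) * inverse (x - x3))" if "x \<noteq> x3" for x
    using that by (simp add: quat_ops)
  have "qGL2 ?S" using qGL2_pole_zero d(1) by blast
  moreover have "flt ?S (Fin x1) = Fin 0" using d f[of x1] by simp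
  moreover have "flt ?S Infty = Fin 1" by (simp add: quat_ops)
  moreover have "flt ?S (Fin x3) = Infty" by (simp add: quat_ops)
  moreover have "flt ?S (Fin x4) = Fin (qcr (Fin x1) Infty (Fin x3) (Fin x4))"
    using d f[of x4] by (simp add: quat_ops)
  ultimately show ?thesis by blast
qed

lemma normal_form_Infty_third:
  assumes "distinct [Fin x1, Fin x2, Infty, Fin x4]"
  shows "\<exists>S. qGL2 S \<and> flt S (Fin x1) = Fin 0 \<and> flt S (Fin x2) = Fin 1 \<and> flt S Infty = Infty
     \<and> flt S (Fin x4) = Fin (qcr (Fin x1) (Fin x2) Infty (Fin x4))"
proof -
  define a where "a = inverse (x2 - x1)"
  have "x1 \<noteq> x2" using assms by auto
  then have a: "a \<noteq> 0" "a * (x2 - x1) = 1" by (simp_all add: a_def)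
  let ?S = "(a, - (a * x1), 0, 1)"
  have f: "flt ?S (Fin x) = Fin (a * (x - x1))" for x
    by (simp add: quat_ops algebra_simps)
  have "qGL2 ?S" using qGL2_affine a(1) by blast
  moreover have "flt ?S (Fin x1) = Fin 0" using f[of x1] by simp
  moreover have "flt ?S (Fin x2) = Fin 1" using f[of x2] a by simp
  moreover have "flt ?S Infty = Infty" by (simp add: quat_ops)
  moreover have "flt ?S (Fin x4) = Fin (qcr (Fin x1) (Fin x2) Infty (Fin x4))"
    using f[of x4] by (simp add: quat_ops a_def)
  ultimately show ?thesis by blast
qed

lemma normal_form:
  assumes "distinct [q1, q2, q3, q4]"
  obtains S where "qGL2 S" "flt S q1 = Fin 0" "flt S q2 = Fin 1" "flt S q3 = Infty"
    "flt S q4 = Fin (qcr q1 q2 q3 q4)"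
proof -
  have "\<exists>S. qGL2 S \<and> flt S q1 = Fin 0 \<and> flt S q2 = Fin 1 \<and> flt S q3 = Infty
      \<and> flt S q4 = Fin (qcr q1 q2 q3 q4)"
  proof (cases q1; cases q2; cases q3)
    fix x1 x2 x3 assume "q1 = Fin x1" "q2 = Fin x2" "q3 = Fin x3"
    then show ?thesis using normal_form_finite assms by blast
  next
    fix x1 x2 assume "q1 = Fin x1" "q2 = Fin x2" "q3 = Infty"
    moreover obtain x4 where "q4 = Fin x4" using assms \<open>q3 = Infty\<close> by (cases q4) auto
    ultimately show ?thesis using normal_form_Infty_third assms by blast
  next
    fix x1 x3 assume "q1 = Fin x1" "q2 = Infty" "q3 = Fin x3"
    moreover obtain x4 where "q4 = Fin x4" using assms \<open>q2 = Infty\<close> by (cases q4) auto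
    ultimately show ?thesis using normal_form_Infty_second assms by blast
  next
    fix x2 x3 assume "q1 = Infty" "q2 = Fin x2" "q3 = Fin x3"
    moreover obtain x4 where "q4 = Fin x4" using assms \<open>q1 = Infty\<close> by (cases q4) auto
    ultimately show ?thesis using normal_form_Infty_first assms by blast
  qed (use assms in auto)
  then show ?thesis using that by blast
qed

lemma cross_ratios_conjugate_if_flt:
  assumes "distinct [q1, q2, q3, q4]" "distinct [p1, p2, p3, p4]" "qGL2 g"
    and "flt g q1 = p1" "flt g q2 = p2" "flt g q3 = p3" "flt g q4 = p4"
  shows "\<exists>l. l \<noteq> 0 \<and> qcr p1 p2 p3 p4 = l * qcr q1 q2 q3 q4 * inverse l"
proof -
  obtain S where S: "qGL2 S" "flt S q1 = Fin 0" "flt S q2 = Fin 1" "flt S q3 = Infty"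
    "flt S q4 = Fin (qcr q1 q2 q3 q4)" using normal_form[OF assms(1)] .
  obtain S' where S': "flt S' p1 = Fin 0" "flt S' p2 = Fin 1" "flt S' p3 = Infty"
    "flt S' p4 = Fin (qcr p1 p2 p3 p4)" using normal_form[OF assms(2)] by metis
  obtain H where H: "qGL2 H" "\<And>p. flt H (flt S p) = p" using qGL2_inverse_flt[OF S(1)] by metis
  let ?T = "qmat_mult S' (qmat_mult g H)"
  have T: "flt ?T (flt S p) = flt S' (flt g p)" for p
    using flt_qmat_mult[OF qGL2_mult[OF assms(3) H(1)]] flt_qmat_mult[OF H(1)] H(2) by simp
  have "flt ?T (Fin 0) = Fin 0" "flt ?T (Fin 1) = Fin 1" "flt ?T Infty = Infty"
    using T[of q1] T[of q2] T[of q3] S S' assms(4-6) by simp_all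
  then obtain l where "l \<noteq> 0" "\<And>x. flt ?T (Fin x) = Fin (l * x * inverse l)"
    using flt_fixing_0_1_Infty_is_conjugation by metis
  moreover have "flt ?T (Fin (qcr q1 q2 q3 q4)) = Fin (qcr p1 p2 p3 p4)"
    using T[of q4] S(5) S'(4) assms(7) by simp
  ultimately show ?thesis by auto
qed

lemma flt_exists_if_cross_ratios_conjugate:
  assumes "distinct [q1, q2, q3, q4]" "distinct [p1, p2, p3, p4]"
    and "l \<noteq> 0" "qcr p1 p2 p3 p4 = l * qcr q1 q2 q3 q4 * inverse l"
  shows "\<exists>g. qGL2 g \<and> flt g q1 = p1 \<and> flt g q2 = p2 \<and> flt g q3 = p3 \<and> flt g q4 = p4"
proof -
  obtain S where S: "qGL2 S" "flt S q1 = Fin 0" "flt S q2 = Fin 1" "flt S q3 = Infty"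
    "flt S q4 = Fin (qcr q1 q2 q3 q4)" using normal_form[OF assms(1)] .
  obtain S' where S': "qGL2 S'" "flt S' p1 = Fin 0" "flt S' p2 = Fin 1" "flt S' p3 = Infty"
    "flt S' p4 = Fin (qcr p1 p2 p3 p4)" using normal_form[OF assms(2)] .
  obtain H where H: "qGL2 H" "\<And>p. flt H (flt S' p) = p" using qGL2_inverse_flt[OF S'(1)] by metis
  let ?C = "(l, 0, 0, l)"
  have C: "flt ?C (flt S q1) = flt S' p1" "flt ?C (flt S q2) = flt S' p2"
    "flt ?C (flt S q3) = flt S' p3" "flt ?C (flt S q4) = flt S' p4"
    using S S' assms(3,4) flt_scalar_qmat flt_scalar_qmat_Infty by simp_all
  let ?g = "qmat_mult H (qmat_mult ?C S)"
  have "qGL2 ?g" using qGL2_mult H(1) qGL2_scalar_qmat[OF assms(3)] S(1) by blast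
  moreover have "flt ?g p = flt H (flt ?C (flt S p))" for p
    using flt_qmat_mult[OF qGL2_mult[OF qGL2_scalar_qmat[OF assms(3)] S(1)]] flt_qmat_mult[OF S(1)]
    by simp
  ultimately show ?thesis using C H(2) by metis
qed

theorem mainTheorem1:
  fixes q1 q2 q3 q4 p1 p2 p3 p4 :: qext
  assumes "distinct [q1, q2, q3, q4]"
    and "distinct [p1, p2, p3, p4]"
  shows "(\<exists>g. qGL2 g \<and> flt g q1 = p1 \<and> flt g q2 = p2 \<and> flt g q3 = p3 \<and> flt g q4 = p4)
         \<longleftrightarrow> RH q1 q2 q3 q4 = RH p1 p2 p3 p4"
  unfolding RH_eq_iff_conjugate
  using cross_ratios_conjugate_if_flt[OF assms] flt_exists_if_cross_ratios_conjugate[OF assms]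
  by blast

end
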